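(* Let $(G,k)$ be an instance and $V_{\mathrm{ld}}$ the set of large-dense vertices. Suppose that no vertex $v\in V_{\mathrm{ld}}$ admits a collection of $k+1$ vertex sets, each contained in $V_{\mathrm{ld}}$ and inducing $P_3$, such that any two of them intersect exactly in $\{v\}$. If there is a collection $\mathcal{P}$ of more than $k^2$ vertex sets, each contained in $V_{\mathrm{ld}}$ and inducing $P_3$, such that any two members of $\mathcal{P}$ share at most one vertex, then $(G,k)$ is a no-instance.
   Context: Graphs are undirected, without self-loops, possibly with multi-edges. $N(v)$ is the set of vertices adjacent to $v$; $\rho(v)$ is the number of unordered pairs $\{u_1,u_2\}\subseteq N(v)$ joined by at least one edge. A vertex $v$ is large-dense if $|N(v)|>7k$ and $\rho(v)> |N(v)|(|N(v)|-1)/4$. A set of three distinct vertices $\{v_1,v_2,v_3\}$ induces $P_3$ if $v_1v_2$ and $v_2v_3$ are edges (possibly multi-edges) and $v_1v_3$ is not an edge. A vertex set induces a clique if between any two distinct vertices there is exactly one edge, and a tree if it is connected and acyclic (two parallel edges form a cycle). A feasible solution is $X\subseteq V$, $|X|\le k$, with every component of $G-X$ a clique or a tree; $(G,k)$ is a yes-instance if one exists. *)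

theory Defs
  imports Complex_Main
begin

text \<open>A finite undirected multigraph without self-loops: vertex set V and edge
 multiplicity function m (number of parallel edges between two vertices).\<close>

definition multigraph :: "'a set \<Rightarrow> ('a \<Rightarrow> 'a \<Rightarrow> nat) \<Rightarrow> bool" where
  "multigraph V m \<longleftrightarrow> finite V \<and> (\<forall>u v. m u v = m v u) \<and> (\<forall>v. m v v = 0)
     \<and> (\<forall>u v. m u v > 0 \<longrightarrow> u \<in> V \<and> v \<in> V)"

definition adj :: "('a \<Rightarrow> 'a \<Rightarrow> nat) \<Rightarrow> 'a \<Rightarrow> 'a \<Rightarrow> bool" where
  "adj m u v \<longleftrightarrow> m u v > 0"

definition nbhd :: "'a set \<Rightarrow> ('a \<Rightarrow> 'a \<Rightarrow> nat) \<Rightarrow> 'a \<Rightarrow> 'a set" where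
  "nbhd V m v = {u \<in> V. adj m v u}"

definition rho :: "'a set \<Rightarrow> ('a \<Rightarrow> 'a \<Rightarrow> nat) \<Rightarrow> 'a \<Rightarrow> nat" where
  "rho V m v = card {{u1, u2} | u1 u2. u1 \<in> nbhd V m v \<and> u2 \<in> nbhd V m v \<and> u1 \<noteq> u2 \<and> adj m u1 u2}"

definition large_dense :: "'a set \<Rightarrow> ('a \<Rightarrow> 'a \<Rightarrow> nat) \<Rightarrow> nat \<Rightarrow> 'a \<Rightarrow> bool" where
  "large_dense V m k v \<longleftrightarrow> v \<in> V \<and> card (nbhd V m v) > 7 * k \<and>
     real (rho V m v) > real (card (nbhd V m v)) * (real (card (nbhd V m v)) - 1) / 4"

definition V_ld :: "'a set \<Rightarrow> ('a \<Rightarrow> 'a \<Rightarrow> nat) \<Rightarrow> nat \<Rightarrow> 'a set" where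
  "V_ld V m k = {v \<in> V. large_dense V m k v}"

definition induces_P3 :: "('a \<Rightarrow> 'a \<Rightarrow> nat) \<Rightarrow> 'a set \<Rightarrow> bool" where
  "induces_P3 m S \<longleftrightarrow> (\<exists>v1 v2 v3. S = {v1, v2, v3} \<and> v1 \<noteq> v2 \<and> v2 \<noteq> v3 \<and> v1 \<noteq> v3
      \<and> adj m v1 v2 \<and> adj m v2 v3 \<and> \<not> adj m v1 v3)"

definition reach_in :: "('a \<Rightarrow> 'a \<Rightarrow> nat) \<Rightarrow> 'a set \<Rightarrow> 'a \<Rightarrow> 'a \<Rightarrow> bool" where
  "reach_in m S = (\<lambda>x y. x \<in> S \<and> y \<in> S \<and> adj m x y)\<^sup>*\<^sup>*"

definition connected_in :: "('a \<Rightarrow> 'a \<Rightarrow> nat) \<Rightarrow> 'a set \<Rightarrow> bool" where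
  "connected_in m S \<longleftrightarrow> S \<noteq> {} \<and> (\<forall>x\<in>S. \<forall>y\<in>S. reach_in m S x y)"

definition components :: "('a \<Rightarrow> 'a \<Rightarrow> nat) \<Rightarrow> 'a set \<Rightarrow> 'a set set" where
  "components m W = {{y \<in> W. reach_in m W x y} | x. x \<in> W}"

text \<open>A cycle in the multigraph induced by S: either a pair of parallel edges,
  or a closed walk through at least 3 distinct vertices.\<close>
definition has_cycle_in :: "('a \<Rightarrow> 'a \<Rightarrow> nat) \<Rightarrow> 'a set \<Rightarrow> bool" where
  "has_cycle_in m S \<longleftrightarrow>
     (\<exists>x\<in>S. \<exists>y\<in>S. x \<noteq> y \<and> m x y \<ge> 2) \<or>
     (\<exists>xs. length xs \<ge> 3 \<and> distinct xs \<and> set xs \<subseteq> S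
        \<and> (\<forall>i. Suc i < length xs \<longrightarrow> adj m (xs ! i) (xs ! Suc i))
        \<and> adj m (last xs) (hd xs))"

definition induces_clique :: "('a \<Rightarrow> 'a \<Rightarrow> nat) \<Rightarrow> 'a set \<Rightarrow> bool" where
  "induces_clique m S \<longleftrightarrow> (\<forall>x\<in>S. \<forall>y\<in>S. x \<noteq> y \<longrightarrow> m x y = 1)"

definition induces_tree :: "('a \<Rightarrow> 'a \<Rightarrow> nat) \<Rightarrow> 'a set \<Rightarrow> bool" where
  "induces_tree m S \<longleftrightarrow> connected_in m S \<and> \<not> has_cycle_in m S"

definition feasible :: "'a set \<Rightarrow> ('a \<Rightarrow> 'a \<Rightarrow> nat) \<Rightarrow> nat \<Rightarrow> 'a set \<Rightarrow> bool" where
  "feasible V m k X \<longleftrightarrow> X \<subseteq> V \<and> card X \<le> k \<and>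
     (\<forall>C \<in> components m (V - X). induces_clique m C \<or> induces_tree m C)"

definition yes_instance :: "'a set \<Rightarrow> ('a \<Rightarrow> 'a \<Rightarrow> nat) \<Rightarrow> nat \<Rightarrow> bool" where
  "yes_instance V m k \<longleftrightarrow> (\<exists>X. feasible V m k X)"

end

theory Submission
  imports Defs
begin

text \<open>A solution \<open>X\<close> must meet every \<open>P\<^sub>3\<close> inside \<open>V_ld\<close>: the component of \<open>G - X\<close> containing
  it is not a clique, and it is not a tree either, because a large-dense vertex \<open>v\<close> still lies on
  a triangle after deleting \<open>k\<close> vertices (they cover at most \<open>k |N(v)| < \<rho>(v)\<close> of the edges
  inside \<open>N(v)\<close>). Two members of \<open>\<P>\<close> through a common vertex \<open>x\<close> meet exactly in \<open>{x}\<close>, so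
  without a flower each of the at most \<open>k\<close> vertices of \<open>X\<close> lies in at most \<open>k\<close> members of \<open>\<P>\<close>,
  whence \<open>|\<P>| \<le> k\<^sup>2\<close>.\<close>

lemma adj_sym: "multigraph V m \<Longrightarrow> adj m u v \<Longrightarrow> adj m v u"
  unfolding multigraph_def adj_def by metis

lemma adj_imp_neq: "multigraph V m \<Longrightarrow> adj m u v \<Longrightarrow> u \<noteq> v"
  unfolding multigraph_def adj_def by auto

lemma triangle_imp_has_cycle_in:
  assumes "multigraph V m" and "x \<in> S" "y \<in> S" "z \<in> S"
    and xy: "adj m x y" and yz: "adj m y z" and "adj m z x"
  shows "has_cycle_in m S"
  unfolding has_cycle_in_def
proof (intro disjI2 exI[of _ "[x, y, z]"] conjI allI impI)
  fix i assume "Suc i < length [x, y, z]"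
  then have "i = 0 \<or> i = 1" by auto
  then show "adj m ([x, y, z] ! i) ([x, y, z] ! Suc i)" using xy yz by auto
qed (use assms adj_imp_neq[OF assms(1)] in auto)

lemma component_adj_closed:
  assumes "C \<in> components m W" "x \<in> C" "y \<in> W" "adj m x y"
  shows "y \<in> C"
proof -
  obtain x0 where C: "C = {y \<in> W. reach_in m W x0 y}"
    using assms(1) unfolding components_def by auto
  with assms(2-4) have "reach_in m W x0 y"
    unfolding reach_in_def by (auto intro: rtranclp.rtrancl_into_rtrancl)
  with C assms(3) show ?thesis by simp
qed

lemma component_containing:
  assumes "x \<in> W"
  obtains C where "C \<in> components m W" "x \<in> C"
  using assms unfolding components_def reach_in_def by auto

lemma rho_le_card_mult_card_nbhd:
  assumes "multigraph V m" "finite X"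
    and covers: "\<And>u1 u2. u1 \<in> nbhd V m w \<Longrightarrow> u2 \<in> nbhd V m w \<Longrightarrow> adj m u1 u2
                   \<Longrightarrow> u1 \<in> X \<or> u2 \<in> X"
  shows "rho V m w \<le> card X * card (nbhd V m w)"
proof -
  define N where "N = nbhd V m w"
  have "finite N"
    using assms(1) unfolding N_def nbhd_def multigraph_def by auto
  have "{{u1, u2} | u1 u2. u1 \<in> N \<and> u2 \<in> N \<and> u1 \<noteq> u2 \<and> adj m u1 u2}
          \<subseteq> (\<Union>x\<in>X. (\<lambda>u. {x, u}) ` N)"
    using covers unfolding N_def by fastforce
  then have "rho V m w \<le> card (\<Union>x\<in>X. (\<lambda>u. {x, u}) ` N)"
    unfolding rho_def N_def[symmetric] using \<open>finite X\<close> \<open>finite N\<close> by (intro card_mono) auto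
  also have "\<dots> \<le> (\<Sum>x\<in>X. card ((\<lambda>u. {x, u}) ` N))"
    by (rule card_UN_le[OF \<open>finite X\<close>])
  also have "\<dots> \<le> (\<Sum>x\<in>X. card N)"
    by (intro sum_mono card_image_le[OF \<open>finite N\<close>])
  finally show ?thesis unfolding N_def by simp
qed

lemma large_dense_card_nbhd_lt_rho:
  assumes "large_dense V m k w"
  shows "k * card (nbhd V m w) < rho V m w"
proof -
  define n where "n = card (nbhd V m w)"
  have n: "7 * k < n" and rho: "real n * (real n - 1) / 4 < real (rho V m w)"
    using assms unfolding large_dense_def n_def by auto
  have "4 * real k \<le> real n - 1" using n by linarith
  then have "4 * real k * real n \<le> (real n - 1) * real n"
    by (rule mult_right_mono) simp
  then have "real k * real n \<le> real n * (real n - 1) / 4"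
    by (simp add: algebra_simps)
  with rho have "real (k * n) < real (rho V m w)" by simp
  then show ?thesis unfolding n_def of_nat_less_iff .
qed

lemma large_dense_triangle_avoiding:
  assumes "multigraph V m" "large_dense V m k w" "finite X" "card X \<le> k"
  obtains u1 u2 where "u1 \<in> V - X" "u2 \<in> V - X" "adj m w u1" "adj m w u2" "adj m u1 u2"
proof (rule ccontr)
  assume "\<not> thesis"
  with that have "u1 \<in> X \<or> u2 \<in> X"
    if "u1 \<in> nbhd V m w" "u2 \<in> nbhd V m w" "adj m u1 u2" for u1 u2
    using that unfolding nbhd_def by blast
  then have "rho V m w \<le> card X * card (nbhd V m w)"
    using rho_le_card_mult_card_nbhd[OF assms(1,3)] by blast
  also have "\<dots> \<le> k * card (nbhd V m w)"
    using assms(4) by simp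
  finally show False
    using large_dense_card_nbhd_lt_rho[OF assms(2)] by simp
qed

lemma feasible_hits_large_dense_P3:
  assumes mg: "multigraph V m" and "feasible V m k X"
    and "S \<subseteq> V_ld V m k" "induces_P3 m S"
  shows "S \<inter> X \<noteq> {}"
proof
  assume "S \<inter> X = {}"
  obtain v1 v2 v3 where S: "S = {v1, v2, v3}" "v1 \<noteq> v3"
    and a12: "adj m v1 v2" and a23: "adj m v2 v3" and n13: "\<not> adj m v1 v3"
    using assms(4) unfolding induces_P3_def by auto
  have X: "X \<subseteq> V" "card X \<le> k"
    and solution: "\<forall>C \<in> components m (V - X). induces_clique m C \<or> induces_tree m C"
    using assms(2) unfolding feasible_def by auto
  have "finite X" using X(1) mg finite_subset unfolding multigraph_def by auto
  have W: "v1 \<in> V - X" "v2 \<in> V - X" "v3 \<in> V - X"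
    using assms(3) \<open>S \<inter> X = {}\<close> S(1) unfolding V_ld_def by auto
  obtain C where C: "C \<in> components m (V - X)" "v1 \<in> C"
    using component_containing[OF W(1)] by blast
  have "v3 \<in> C"
    using component_adj_closed[OF C(1) component_adj_closed[OF C W(2) a12] W(3) a23] .
  with C(2) S(2) n13 have "\<not> induces_clique m C"
    unfolding induces_clique_def adj_def by fastforce
  moreover have "\<not> induces_tree m C"
  proof -
    have "large_dense V m k v1" using assms(3) S(1) unfolding V_ld_def by auto
    then obtain u1 u2 where u: "u1 \<in> V - X" "u2 \<in> V - X"
      and a: "adj m v1 u1" "adj m v1 u2" "adj m u1 u2"
      using large_dense_triangle_avoiding[OF mg _ \<open>finite X\<close> X(2)] by blast
    have "u1 \<in> C" "u2 \<in> C"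
      using component_adj_closed[OF C] u a by auto
    then have "has_cycle_in m C"
      using triangle_imp_has_cycle_in[OF mg C(2)] a adj_sym[OF mg a(2)] by blast
    then show ?thesis unfolding induces_tree_def by blast
  qed
  ultimately show False using solution C(1) by blast
qed

lemma pairwise_card_inter_le_one_imp_sunflower:
  assumes "\<forall>S \<in> F. finite S \<and> x \<in> S"
    and "\<forall>S \<in> F. \<forall>T \<in> F. S \<noteq> T \<longrightarrow> card (S \<inter> T) \<le> 1"
  shows "\<forall>S \<in> F. \<forall>T \<in> F. S \<noteq> T \<longrightarrow> S \<inter> T = {x}"
proof (intro ballI impI)
  fix S T assume ST: "S \<in> F" "T \<in> F" "S \<noteq> T"
  with assms(1) have "x \<in> S \<inter> T" "finite (S \<inter> T)" by auto
  moreover have "card (S \<inter> T) \<le> 1" using assms(2) ST by blast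
  ultimately have "\<forall>y \<in> S \<inter> T. y = x"
    by (simp add: card_le_Suc0_iff_eq)
  with \<open>x \<in> S \<inter> T\<close> show "S \<inter> T = {x}" by blast
qed

lemma many_P3_through_vertex_imp_flower:
  assumes P: "\<forall>S \<in> P. S \<subseteq> A \<and> induces_P3 m S"
    and meet: "\<forall>S \<in> P. \<forall>T \<in> P. S \<noteq> T \<longrightarrow> card (S \<inter> T) \<le> 1"
    and many: "k < card {S \<in> P. x \<in> S}"
  shows "x \<in> A \<and> (\<exists>F. card F = k + 1 \<and> (\<forall>S \<in> F. S \<subseteq> A \<and> induces_P3 m S) \<and>
           (\<forall>S \<in> F. \<forall>T \<in> F. S \<noteq> T \<longrightarrow> S \<inter> T = {x}))"
proof -
  obtain F where F: "F \<subseteq> {S \<in> P. x \<in> S}" "card F = k + 1"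
    using obtain_subset_with_card_n[of "k + 1" "{S \<in> P. x \<in> S}"] many by auto
  then obtain S0 where "S0 \<in> F" by fastforce
  with F(1) P have "x \<in> A" by blast
  have "\<forall>S \<in> F. finite S \<and> x \<in> S"
    using F(1) P unfolding induces_P3_def by auto
  then have "\<forall>S \<in> F. \<forall>T \<in> F. S \<noteq> T \<longrightarrow> S \<inter> T = {x}"
    using meet F(1) by (intro pairwise_card_inter_le_one_imp_sunflower) blast+
  with \<open>x \<in> A\<close> F P show ?thesis by blast
qed

lemma card_le_card_hitting_set_mult:
  assumes "finite P" "finite X" "\<forall>S \<in> P. S \<inter> X \<noteq> {}"
    and "\<And>x. x \<in> X \<Longrightarrow> card {S \<in> P. x \<in> S} \<le> d"
  shows "card P \<le> card X * d"
proof -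
  have "P \<subseteq> (\<Union>x\<in>X. {S \<in> P. x \<in> S})" using assms(3) by blast
  then have "card P \<le> card (\<Union>x\<in>X. {S \<in> P. x \<in> S})"
    using assms(1,2) by (intro card_mono) auto
  also have "\<dots> \<le> (\<Sum>x\<in>X. card {S \<in> P. x \<in> S})" by (rule card_UN_le[OF assms(2)])
  also have "\<dots> \<le> (\<Sum>x\<in>X. d)" using assms(4) by (rule sum_mono)
  finally show ?thesis by simp
qed

theorem mainTheorem12:
  fixes V :: "'a set" and m :: "'a \<Rightarrow> 'a \<Rightarrow> nat" and k :: nat
  assumes "multigraph V m"
    and no_flower: "\<not> (\<exists>v \<in> V_ld V m k. \<exists>F. card F = k + 1 \<and>
            (\<forall>S \<in> F. S \<subseteq> V_ld V m k \<and> induces_P3 m S) \<and>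
            (\<forall>S \<in> F. \<forall>T \<in> F. S \<noteq> T \<longrightarrow> S \<inter> T = {v}))"
    and "finite P" and "card P > k ^ 2"
    and "\<forall>S \<in> P. S \<subseteq> V_ld V m k \<and> induces_P3 m S"
    and "\<forall>S \<in> P. \<forall>T \<in> P. S \<noteq> T \<longrightarrow> card (S \<inter> T) \<le> 1"
  shows "\<not> yes_instance V m k"
proof
  assume "yes_instance V m k"
  then obtain X where X: "feasible V m k X" unfolding yes_instance_def by blast
  then have "card X \<le> k" "finite X"
    using assms(1) finite_subset unfolding feasible_def multigraph_def by auto
  have "\<forall>S \<in> P. S \<inter> X \<noteq> {}"
    using feasible_hits_large_dense_P3[OF assms(1) X] assms(5) by blast
  moreover have "card {S \<in> P. x \<in> S} \<le> k" for x
    using many_P3_through_vertex_imp_flower[OF assms(5,6)] no_flower by (meson not_le)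
  ultimately have "card P \<le> card X * k"
    using card_le_card_hitting_set_mult[OF assms(3) \<open>finite X\<close>] by blast
  also have "\<dots> \<le> k ^ 2"
    using \<open>card X \<le> k\<close> by (simp add: power2_eq_square)
  finally show False using assms(4) by simp
qed

end
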